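(* Let $\mathbf r(x,y)$ be the middle surface of a membrane O surface with constant purely normal load $q_n\neq 0$ (setting and notation as in the context), and suppose it is of the 2nd kind, i.e. the curvature line coordinates $(x,y)$ are such that $$2\overline{A}_1 H_\circ - q_n A_1^2 = -q_n,\qquad 2\overline{A}_2 K_\circ - q_n A_2^2 = -q_n$$ (the normalization $f(x)=g(y)=q_n$). Then the first and third fundamental forms are represented as $$\mathrm{I} = (\cos\alpha + h\sin\alpha)^2\,dx^2 + (\sin\alpha - h\cos\alpha)^2\,dy^2,\qquad \mathrm{III} = e^{2\xi}(\sin^2\alpha\,dx^2 + \cos^2\alpha\,dy^2),$$ where the functions $h,\alpha,\xi$ of $(x,y)$ satisfy the system $$h_x = (h+\cot\alpha)\,\xi_x,\qquad h_y = (h-\tan\alpha)\,\xi_y,$$ $$\xi_{xy} = \xi_x\xi_y + (\log\sin\alpha)_y\,\xi_x + (\log\cos\alpha)_x\,\xi_y,$$ $$(-\alpha_x + \xi_x\cot\alpha)_x + (\alpha_y + \xi_y\tan\alpha)_y + e^{2\xi}\sin\alpha\cos\alpha = 0.$$ Furthermore, the stress resultants are given by $$T_1 = \frac{q_n e^{-\xi}}{2}\,\frac{2h\sin\alpha + (1-h^2)\cos\alpha}{\sin\alpha - h\cos\alpha},\qquad T_2 = \frac{q_n e^{-\xi}}{2}\,\frac{2h\cos\alpha - (1-h^2)\sin\alpha}{\cos\alpha + h\sin\alpha}.$$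
   Context: Let $\mathbf r(x,y)$ be a smooth surface in $\mathbb R^3$ parametrized by curvature line coordinates $(x,y)$, normalized so that $\mathbf r_x = A_1\mathbf X$, $\mathbf r_y = A_2\mathbf Y$ with $\mathbf X,\mathbf Y$ orthonormal. Let $\mathbf N = \mathbf X\times\mathbf Y$, let $\kappa_1,\kappa_2$ be the principal curvatures along the $x$- and $y$-lines, and set $H_\circ = -\kappa_1 A_1$, $K_\circ = -\kappa_2 A_2$, so that $\mathbf N_x = H_\circ\mathbf X$, $\mathbf N_y = K_\circ\mathbf Y$; the first fundamental form is $\mathrm I = A_1^2dx^2 + A_2^2dy^2$ and the third is $\mathrm{III} = H_\circ^2dx^2 + K_\circ^2dy^2$. Put $p=(A_1)_y/A_2$, $q = (A_2)_x/A_1$; the Gauss–Mainardi–Codazzi equations are $(H_\circ)_y = pK_\circ$, $(K_\circ)_x = qH_\circ$, $p_y+q_x+H_\circ K_\circ = 0$. The surface is the middle surface of a shell membrane on which a constant purely normal load $q_n\neq0$ (per unit area) acts, with principal stress lines coinciding with principal curvature lines; the in-plane normal stress resultants $T_1,T_2$ satisfy the equilibrium equations $(T_1)_x + (\log A_1)_x(T_1-T_2)=0$, $(T_2)_y + (\log A_2)_y(T_2-T_1)=0$, $\kappa_1T_1+\kappa_2T_2+q_n=0$. Such a configuration is called a membrane O surface. Set $\overline A_1 = T_2A_1$, $\overline A_2 = T_1A_2$. Then $f := q_nA_1^2 - 2\overline A_1H_\circ$ depends only on $x$ and $g := q_nA_2^2 - 2\overline A_2K_\circ$ depends only on $y$.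 The membrane O surface is said to be of the 1st kind if the curvature line coordinates can be chosen so that $f=-g=q_n$, and of the 2nd kind if they can be chosen so that $f=g=q_n$. *)

theory Defs
  imports "HOL-Analysis.Analysis"
begin

definition dx :: "(real \<times> real \<Rightarrow> 'a::real_normed_vector) \<Rightarrow> real \<times> real \<Rightarrow> 'a" where
  "dx f p = vector_derivative (\<lambda>t. f (t, snd p)) (at (fst p))"

definition dy :: "(real \<times> real \<Rightarrow> 'a::real_normed_vector) \<Rightarrow> real \<times> real \<Rightarrow> 'a" where
  "dy f p = vector_derivative (\<lambda>t. f (fst p, t)) (at (snd p))"

fun pderivs :: "bool list \<Rightarrow> (real \<times> real \<Rightarrow> 'a::real_normed_vector) \<Rightarrow> real \<times> real \<Rightarrow> 'a" where
  "pderivs [] f = f"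
| "pderivs (b # bs) f = (if b then dx else dy) (pderivs bs f)"

definition smooth_on :: "(real \<times> real) set \<Rightarrow> (real \<times> real \<Rightarrow> 'a::real_normed_vector) \<Rightarrow> bool" where
  "smooth_on U f \<longleftrightarrow> (\<forall>bs. pderivs bs f differentiable_on U)"

end

theory Submission
  imports Defs
begin

(* The normal equation and the two normalisations of the 2nd kind together force
   (Hc A2 - Kc A1)^2 = Hc^2 + Kc^2.  Put exp (2 xi) = Hc^2 + Kc^2; then
   sigma = (Hc A2 - Kc A1) exp (- xi) is +1 or -1, hence locally constant, and one can write
   Hc = exp xi sin alpha, Kc = - sigma exp xi cos alpha, A1 = cos alpha + h sin alpha,
   A2 = sigma (sin alpha - h cos alpha).  In these variables the two Codazzi equations give
   h_x, h_y and express alpha_x, alpha_y through (A2)_x / A1 and (A1)_y / A2; the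
   compatibility condition h_xy = h_yx is the equation for xi_xy, and the Gauss equation
   becomes the last equation of the system.  The stress resultants are read off from the
   normalisations. *)

lemma open_slice_fst: "open U \<Longrightarrow> open {t. (t, y) \<in> U}" for U :: "(real \<times> real) set"
  using continuous_open_vimage[of U "\<lambda>t. (t, y)"] by (simp add: vimage_def continuous_Pair)

lemma open_slice_snd: "open U \<Longrightarrow> open {t. (x, t) \<in> U}" for U :: "(real \<times> real) set"
  using continuous_open_vimage[of U "\<lambda>t. (x, t)"] by (simp add: vimage_def continuous_Pair)

lemma has_vector_derivative_dx:
  assumes "open U" "p \<in> U" "f differentiable_on U"
  shows "((\<lambda>t. f (t, snd p)) has_vector_derivative dx f p) (at (fst p))"
proof -
  have "f differentiable at ((\<lambda>t. (t, snd p)) (fst p))"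
    using assms differentiable_on_eq_differentiable_at by fastforce
  then have "(f \<circ> (\<lambda>t. (t, snd p))) differentiable at (fst p)"
    by (intro differentiable_chain_at) (auto simp: differentiable_def intro!: derivative_eq_intros)
  then show ?thesis
    unfolding dx_def by (simp add: o_def vector_derivative_works)
qed

lemma has_vector_derivative_dy:
  assumes "open U" "p \<in> U" "f differentiable_on U"
  shows "((\<lambda>t. f (fst p, t)) has_vector_derivative dy f p) (at (snd p))"
proof -
  have "f differentiable at ((\<lambda>t. (fst p, t)) (snd p))"
    using assms differentiable_on_eq_differentiable_at by fastforce
  then have "(f \<circ> (\<lambda>t. (fst p, t))) differentiable at (snd p)"
    by (intro differentiable_chain_at) (auto simp: differentiable_def intro!: derivative_eq_intros)
  then show ?thesis
    unfolding dy_def by (simp add: o_def vector_derivative_works)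
qed

lemma has_real_derivative_dx:
  fixes f :: "real \<times> real \<Rightarrow> real"
  assumes "open U" "p \<in> U" "f differentiable_on U"
  shows "((\<lambda>t. f (t, snd p)) has_real_derivative dx f p) (at (fst p))"
  using has_vector_derivative_dx[OF assms] by (simp add: has_real_derivative_iff_has_vector_derivative)

lemma has_real_derivative_dy:
  fixes f :: "real \<times> real \<Rightarrow> real"
  assumes "open U" "p \<in> U" "f differentiable_on U"
  shows "((\<lambda>t. f (fst p, t)) has_real_derivative dy f p) (at (snd p))"
  using has_vector_derivative_dy[OF assms] by (simp add: has_real_derivative_iff_has_vector_derivative)

lemma dx_eqI: "((\<lambda>t. f (t, snd p)) has_vector_derivative D) (at (fst p)) \<Longrightarrow> dx f p = D"
  unfolding dx_def by (rule vector_derivative_at)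

lemma dy_eqI: "((\<lambda>t. f (fst p, t)) has_vector_derivative D) (at (snd p)) \<Longrightarrow> dy f p = D"
  unfolding dy_def by (rule vector_derivative_at)

lemma dx_eqI_real: "((\<lambda>t. f (t, snd p)) has_real_derivative D) (at (fst p)) \<Longrightarrow> dx f p = (D::real)"
  by (rule dx_eqI) (simp add: has_real_derivative_iff_has_vector_derivative)

lemma dy_eqI_real: "((\<lambda>t. f (fst p, t)) has_real_derivative D) (at (snd p)) \<Longrightarrow> dy f p = (D::real)"
  by (rule dy_eqI) (simp add: has_real_derivative_iff_has_vector_derivative)

lemma dx_cong:
  assumes "open U" "p \<in> U" "\<And>q. q \<in> U \<Longrightarrow> f q = g q"
  shows "dx f p = dx g p"
proof -
  have "eventually (\<lambda>t. (t, snd p) \<in> U) (nhds (fst p))"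
    using eventually_nhds_in_open[OF open_slice_fst[OF assms(1), where y="snd p"]] assms(2)
    by simp
  then have "eventually (\<lambda>t. t \<in> UNIV \<longrightarrow> f (t, snd p) = g (t, snd p)) (nhds (fst p))"
    by (auto elim: eventually_mono simp: assms(3))
  then show ?thesis
    unfolding dx_def by (intro vector_derivative_cong_eq) auto
qed

lemma dy_cong:
  assumes "open U" "p \<in> U" "\<And>q. q \<in> U \<Longrightarrow> f q = g q"
  shows "dy f p = dy g p"
proof -
  have "eventually (\<lambda>t. (fst p, t) \<in> U) (nhds (snd p))"
    using eventually_nhds_in_open[OF open_slice_snd[OF assms(1), where x="fst p"]] assms(2)
    by simp
  then have "eventually (\<lambda>t. t \<in> UNIV \<longrightarrow> f (fst p, t) = g (fst p, t)) (nhds (snd p))"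
    by (auto elim: eventually_mono simp: assms(3))
  then show ?thesis
    unfolding dy_def by (intro vector_derivative_cong_eq) auto
qed

lemma dx_const [simp]: "dx (\<lambda>q. c) p = 0"
  by (rule dx_eqI) simp

lemma dy_const [simp]: "dy (\<lambda>q. c) p = 0"
  by (rule dy_eqI) simp

lemma dx_eq_0_if_constant_on:
  assumes "open U" "p \<in> U" "\<And>q. q \<in> U \<Longrightarrow> f q = c"
  shows "dx f p = 0"
  using dx_cong[OF assms(1,2), of f "\<lambda>q. c"] assms(3) by simp

lemma dy_eq_0_if_constant_on:
  assumes "open U" "p \<in> U" "\<And>q. q \<in> U \<Longrightarrow> f q = c"
  shows "dy f p = 0"
  using dy_cong[OF assms(1,2), of f "\<lambda>q. c"] assms(3) by simp

lemma dx_add: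
  assumes "open U" "p \<in> U" "f differentiable_on U" "g differentiable_on U"
  shows "dx (\<lambda>q. f q + g q) p = dx f p + dx g p"
  by (rule dx_eqI) (intro has_vector_derivative_add has_vector_derivative_dx[OF assms(1,2)] assms(3,4))

lemma dy_add:
  assumes "open U" "p \<in> U" "f differentiable_on U" "g differentiable_on U"
  shows "dy (\<lambda>q. f q + g q) p = dy f p + dy g p"
  by (rule dy_eqI) (intro has_vector_derivative_add has_vector_derivative_dy[OF assms(1,2)] assms(3,4))

lemma dx_bilinear:
  fixes prod :: "'a::real_normed_vector \<Rightarrow> 'b::real_normed_vector \<Rightarrow> 'c::real_normed_vector"
    and f :: "real \<times> real \<Rightarrow> 'a" and g :: "real \<times> real \<Rightarrow> 'b"
  assumes "bounded_bilinear prod" "open U" "p \<in> U" "f differentiable_on U" "g differentiable_on U"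
  shows "dx (\<lambda>q. prod (f q) (g q)) p = prod (f p) (dx g p) + prod (dx f p) (g p)"
  using bounded_bilinear.has_vector_derivative[OF assms(1)
      has_vector_derivative_dx[OF assms(2,3,4)] has_vector_derivative_dx[OF assms(2,3,5)]]
  by (intro dx_eqI) simp

lemma dy_bilinear:
  fixes prod :: "'a::real_normed_vector \<Rightarrow> 'b::real_normed_vector \<Rightarrow> 'c::real_normed_vector"
    and f :: "real \<times> real \<Rightarrow> 'a" and g :: "real \<times> real \<Rightarrow> 'b"
  assumes "bounded_bilinear prod" "open U" "p \<in> U" "f differentiable_on U" "g differentiable_on U"
  shows "dy (\<lambda>q. prod (f q) (g q)) p = prod (f p) (dy g p) + prod (dy f p) (g p)"
  using bounded_bilinear.has_vector_derivative[OF assms(1)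
      has_vector_derivative_dy[OF assms(2,3,4)] has_vector_derivative_dy[OF assms(2,3,5)]]
  by (intro dy_eqI) simp

lemmas dx_inner = dx_bilinear[OF bounded_bilinear_inner]
lemmas dy_inner = dy_bilinear[OF bounded_bilinear_inner]
lemmas dx_scaleR = dx_bilinear[OF bounded_bilinear_scaleR]
lemmas dy_scaleR = dy_bilinear[OF bounded_bilinear_scaleR]

lemma dx_compose:
  fixes f :: "real \<times> real \<Rightarrow> real"
  assumes "open U" "p \<in> U" "f differentiable_on U" "(\<phi> has_real_derivative D) (at (f p))"
  shows "dx (\<lambda>q. \<phi> (f q)) p = D * dx f p"
  using DERIV_chain2[OF _ has_real_derivative_dx[OF assms(1-3)]] assms(4) by (intro dx_eqI_real) simp

lemma dy_compose:
  fixes f :: "real \<times> real \<Rightarrow> real"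
  assumes "open U" "p \<in> U" "f differentiable_on U" "(\<phi> has_real_derivative D) (at (f p))"
  shows "dy (\<lambda>q. \<phi> (f q)) p = D * dy f p"
  using DERIV_chain2[OF _ has_real_derivative_dy[OF assms(1-3)]] assms(4) by (intro dy_eqI_real) simp

lemma differentiable_on_cong:
  assumes "\<And>q. q \<in> U \<Longrightarrow> f q = g q" "f differentiable_on U"
  shows "g differentiable_on U"
  using assms differentiable_transform_within[of f _ U 1 g] unfolding differentiable_on_def by simp

lemma differentiable_on_bilinear:
  fixes prod :: "'a::real_normed_vector \<Rightarrow> 'b::real_normed_vector \<Rightarrow> 'c::real_normed_vector"
    and f :: "real \<times> real \<Rightarrow> 'a" and g :: "real \<times> real \<Rightarrow> 'b"
  assumes "bounded_bilinear prod" "open U" "f differentiable_on U" "g differentiable_on U"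
  shows "(\<lambda>q. prod (f q) (g q)) differentiable_on U"
  using assms bounded_bilinear.FDERIV[OF assms(1)]
  unfolding differentiable_on_eq_differentiable_at[OF assms(2)] differentiable_def by blast

lemma differentiable_on_compose_real:
  fixes f :: "real \<times> real \<Rightarrow> real"
  assumes "open U" "f differentiable_on U" "\<And>q. q \<in> U \<Longrightarrow> (\<phi> has_real_derivative \<phi>' (f q)) (at (f q))"
  shows "(\<lambda>q. \<phi> (f q)) differentiable_on U"
  using assms differentiable_chain_at[of f _ \<phi>, unfolded o_def]
  unfolding differentiable_on_eq_differentiable_at[OF assms(1)]
  by (metis real_differentiable_def differentiable_def has_field_derivative_imp_has_derivative)

definition smooth_upto :: "nat \<Rightarrow> (real \<times> real) set \<Rightarrow> (real \<times> real \<Rightarrow> 'a::real_normed_vector) \<Rightarrow> bool" where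
  "smooth_upto n U f \<longleftrightarrow> (\<forall>bs. length bs < n \<longrightarrow> pderivs bs f differentiable_on U)"

lemma smooth_on_iff_smooth_upto: "smooth_on U f \<longleftrightarrow> (\<forall>n. smooth_upto n U f)"
  unfolding smooth_on_def smooth_upto_def by (meson lessI)

lemma smooth_on_imp_smooth_upto: "smooth_on U f \<Longrightarrow> smooth_upto n U f"
  by (simp add: smooth_on_iff_smooth_upto)

lemma smooth_upto_0 [simp]: "smooth_upto 0 U f"
  by (simp add: smooth_upto_def)

lemma smooth_upto_Suc_imp: "smooth_upto (Suc n) U f \<Longrightarrow> smooth_upto n U f"
  unfolding smooth_upto_def by simp

lemma pderivs_snoc: "pderivs (bs @ [b]) f = pderivs bs ((if b then dx else dy) f)"
  by (induction bs) auto

lemma smooth_upto_Suc: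
  "smooth_upto (Suc n) U f \<longleftrightarrow> f differentiable_on U \<and> smooth_upto n U (dx f) \<and> smooth_upto n U (dy f)"
proof
  assume f: "smooth_upto (Suc n) U f"
  show "f differentiable_on U \<and> smooth_upto n U (dx f) \<and> smooth_upto n U (dy f)"
    using f[unfolded smooth_upto_def, rule_format, of "[]"]
      f[unfolded smooth_upto_def, rule_format, of "_ @ [True]"]
      f[unfolded smooth_upto_def, rule_format, of "_ @ [False]"]
    by (simp add: smooth_upto_def pderivs_snoc)
next
  assume f: "f differentiable_on U \<and> smooth_upto n U (dx f) \<and> smooth_upto n U (dy f)"
  show "smooth_upto (Suc n) U f"
    unfolding smooth_upto_def
  proof (intro allI impI)
    fix bs :: "bool list"
    assume "length bs < Suc n"
    then show "pderivs bs f differentiable_on U"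
      using f by (cases bs rule: rev_exhaust; cases "last bs") (auto simp: smooth_upto_def pderivs_snoc)
  qed
qed

lemma smooth_on_dx: "smooth_on U f \<Longrightarrow> smooth_on U (dx f)"
  by (meson smooth_upto_Suc smooth_on_iff_smooth_upto)

lemma smooth_on_dy: "smooth_on U f \<Longrightarrow> smooth_on U (dy f)"
  by (meson smooth_upto_Suc smooth_on_iff_smooth_upto)

lemma smooth_on_imp_differentiable_on: "smooth_on U f \<Longrightarrow> f differentiable_on U"
  by (metis smooth_upto_Suc smooth_on_iff_smooth_upto)

lemma smooth_upto_cong:
  assumes "open U" "\<And>q. q \<in> U \<Longrightarrow> f q = g q" "smooth_upto n U f"
  shows "smooth_upto n U g"
  using assms(2,3)
proof (induction n arbitrary: f g)
  case (Suc n)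
  have "q \<in> U \<Longrightarrow> dx f q = dx g q" "q \<in> U \<Longrightarrow> dy f q = dy g q" for q
    using dx_cong[OF assms(1)] dy_cong[OF assms(1)] Suc.prems(1) by blast+
  then show ?case
    using Suc differentiable_on_cong by (simp add: smooth_upto_Suc) blast
qed simp

lemma smooth_on_cong:
  "open U \<Longrightarrow> (\<And>q. q \<in> U \<Longrightarrow> f q = g q) \<Longrightarrow> smooth_on U f \<Longrightarrow> smooth_on U g"
  using smooth_upto_cong by (metis smooth_on_iff_smooth_upto)

lemma smooth_upto_const: "smooth_upto n U (\<lambda>q. c)"
proof (induction n arbitrary: c)
  case (Suc n)
  have "dx (\<lambda>q. c) = (\<lambda>q. 0)" "dy (\<lambda>q. c) = (\<lambda>q. 0)" by auto
  then show ?case using Suc by (simp add: smooth_upto_Suc)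
qed simp

lemma smooth_upto_add:
  assumes "open U"
  shows "smooth_upto n U f \<Longrightarrow> smooth_upto n U g \<Longrightarrow> smooth_upto n U (\<lambda>q. f q + g q)"
proof (induction n arbitrary: f g)
  case (Suc n)
  have f: "f differentiable_on U" "g differentiable_on U"
    using Suc.prems by (auto simp: smooth_upto_Suc)
  have "smooth_upto n U (\<lambda>q. dx f q + dx g q)" "smooth_upto n U (\<lambda>q. dy f q + dy g q)"
    using Suc by (auto simp: smooth_upto_Suc)
  then have "smooth_upto n U (dx (\<lambda>q. f q + g q))" "smooth_upto n U (dy (\<lambda>q. f q + g q))"
    using smooth_upto_cong[OF assms] dx_add[OF assms _ f] dy_add[OF assms _ f]
    by (metis (no_types, lifting))+
  then show ?case
    using f by (simp add: smooth_upto_Suc differentiable_on_add)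
qed simp

lemma smooth_upto_bilinear:
  fixes prod :: "'a::real_normed_vector \<Rightarrow> 'b::real_normed_vector \<Rightarrow> 'c::real_normed_vector"
    and f :: "real \<times> real \<Rightarrow> 'a" and g :: "real \<times> real \<Rightarrow> 'b"
  assumes "bounded_bilinear prod" "open U"
  shows "smooth_upto n U f \<Longrightarrow> smooth_upto n U g \<Longrightarrow> smooth_upto n U (\<lambda>q. prod (f q) (g q))"
proof (induction n arbitrary: f g)
  case (Suc n)
  have f: "f differentiable_on U" "g differentiable_on U"
    using Suc.prems by (auto simp: smooth_upto_Suc)
  have fn: "smooth_upto n U f" "smooth_upto n U g"
    using Suc.prems smooth_upto_Suc_imp by auto
  have "smooth_upto n U (\<lambda>q. prod (f q) (dx g q) + prod (dx f q) (g q))"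
    "smooth_upto n U (\<lambda>q. prod (f q) (dy g q) + prod (dy f q) (g q))"
    using Suc fn by (auto intro!: smooth_upto_add[OF assms(2)] simp: smooth_upto_Suc)
  then have "smooth_upto n U (dx (\<lambda>q. prod (f q) (g q)))" "smooth_upto n U (dy (\<lambda>q. prod (f q) (g q)))"
    using smooth_upto_cong[OF assms(2)] dx_bilinear[OF assms _ f] dy_bilinear[OF assms _ f]
    by (metis (no_types, lifting))+
  then show ?case
    using differentiable_on_bilinear[OF assms f] by (simp add: smooth_upto_Suc)
qed simp

lemma smooth_upto_compose_Suc:
  fixes f :: "real \<times> real \<Rightarrow> real"
  assumes "open U" "\<And>q. q \<in> U \<Longrightarrow> (\<phi> has_real_derivative \<phi>' (f q)) (at (f q))"
    and "smooth_upto (Suc n) U f" "smooth_upto n U (\<lambda>q. \<phi>' (f q))"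
  shows "smooth_upto (Suc n) U (\<lambda>q. \<phi> (f q))"
proof -
  have f: "f differentiable_on U" "smooth_upto n U (dx f)" "smooth_upto n U (dy f)"
    using assms(3) by (auto simp: smooth_upto_Suc)
  have "smooth_upto n U (\<lambda>q. \<phi>' (f q) * dx f q)" "smooth_upto n U (\<lambda>q. \<phi>' (f q) * dy f q)"
    using smooth_upto_bilinear[OF bounded_bilinear_mult assms(1)] assms(4) f by auto
  then have "smooth_upto n U (dx (\<lambda>q. \<phi> (f q)))" "smooth_upto n U (dy (\<lambda>q. \<phi> (f q)))"
    using smooth_upto_cong[OF assms(1)] dx_compose[OF assms(1) _ f(1) assms(2)]
      dy_compose[OF assms(1) _ f(1) assms(2)]
    by (metis (no_types, lifting))+
  then show ?thesis
    using differentiable_on_compose_real[OF assms(1) f(1) assms(2)] by (simp add: smooth_upto_Suc)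
qed

lemma smooth_upto_exp:
  fixes f :: "real \<times> real \<Rightarrow> real"
  assumes "open U"
  shows "smooth_upto n U f \<Longrightarrow> smooth_upto n U (\<lambda>q. exp (f q))"
proof (induction n)
  case (Suc n)
  then have "smooth_upto n U (\<lambda>q. exp (f q))"
    using smooth_upto_Suc_imp by blast
  then show ?case
    using smooth_upto_compose_Suc[OF assms _ Suc.prems, where \<phi>=exp and \<phi>'=exp] by simp
qed simp

lemma smooth_upto_inverse:
  fixes f :: "real \<times> real \<Rightarrow> real"
  assumes "open U" "\<And>q. q \<in> U \<Longrightarrow> f q \<noteq> 0"
  shows "smooth_upto n U f \<Longrightarrow> smooth_upto n U (\<lambda>q. inverse (f q))"
proof (induction n)
  case (Suc n)
  have "smooth_upto n U (\<lambda>q. inverse (f q))"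
    using Suc smooth_upto_Suc_imp by blast
  then have "smooth_upto n U (\<lambda>q. inverse (f q) * inverse (f q))"
    by (intro smooth_upto_bilinear[OF bounded_bilinear_mult assms(1)])
  then have "smooth_upto n U (\<lambda>q. - 1 * (inverse (f q) * inverse (f q)))"
    by (intro smooth_upto_bilinear[OF bounded_bilinear_mult assms(1) smooth_upto_const])
  moreover have "(inverse has_real_derivative - 1 * (inverse (f q) * inverse (f q))) (at (f q))"
    if "q \<in> U" for q
    using assms(2)[OF that] by (auto intro!: derivative_eq_intros simp: power2_eq_square)
  ultimately show ?case
    using smooth_upto_compose_Suc[OF assms(1) _ Suc.prems,
        where \<phi>=inverse and \<phi>'="\<lambda>x. - 1 * (inverse x * inverse x)"]
    by simp
qed simp

lemma smooth_upto_ln: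
  fixes f :: "real \<times> real \<Rightarrow> real"
  assumes "open U" "\<And>q. q \<in> U \<Longrightarrow> f q > 0" "smooth_upto n U f"
  shows "smooth_upto n U (\<lambda>q. ln (f q))"
proof (cases n)
  case (Suc m)
  have "smooth_upto m U f"
    using assms(3) Suc smooth_upto_Suc_imp by simp
  then have "smooth_upto m U (\<lambda>q. inverse (f q))"
    using smooth_upto_inverse[OF assms(1)] assms(2) by (metis less_irrefl)
  moreover have "(ln has_real_derivative inverse (f q)) (at (f q))" if "q \<in> U" for q
    using assms(2)[OF that] by (auto intro!: derivative_eq_intros simp: divide_inverse)
  ultimately show ?thesis
    using smooth_upto_compose_Suc[OF assms(1)] assms(3) Suc by blast
qed simp

lemma smooth_upto_arctan:
  fixes f :: "real \<times> real \<Rightarrow> real"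
  assumes "open U" "smooth_upto n U f"
  shows "smooth_upto n U (\<lambda>q. arctan (f q))"
proof (cases n)
  case (Suc m)
  have "smooth_upto m U (\<lambda>q. 1 + f q * f q)"
    using assms Suc smooth_upto_Suc_imp
    by (intro smooth_upto_add[OF assms(1)] smooth_upto_const smooth_upto_bilinear[OF bounded_bilinear_mult assms(1)]) auto
  then have "smooth_upto m U (\<lambda>q. inverse (1 + f q * f q))"
    by (rule smooth_upto_inverse[OF assms(1), rotated]) (smt (verit) zero_le_square)
  moreover have "(arctan has_real_derivative inverse (1 + f q * f q)) (at (f q))" for q
    by (auto intro!: derivative_eq_intros simp: power2_eq_square)
  ultimately show ?thesis
    using smooth_upto_compose_Suc[OF assms(1) _ _, where \<phi>=arctan and \<phi>'="\<lambda>x. inverse (1 + x * x)"]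
      assms(2) Suc by simp
qed simp

lemma smooth_on_const: "smooth_on U (\<lambda>q. c)"
  by (simp add: smooth_on_iff_smooth_upto smooth_upto_const)

lemma smooth_on_add: "open U \<Longrightarrow> smooth_on U f \<Longrightarrow> smooth_on U g \<Longrightarrow> smooth_on U (\<lambda>q. f q + g q)"
  by (simp add: smooth_on_iff_smooth_upto smooth_upto_add)

lemma smooth_on_bilinear:
  fixes prod :: "'a::real_normed_vector \<Rightarrow> 'b::real_normed_vector \<Rightarrow> 'c::real_normed_vector"
    and f :: "real \<times> real \<Rightarrow> 'a" and g :: "real \<times> real \<Rightarrow> 'b"
  shows "bounded_bilinear prod \<Longrightarrow> open U \<Longrightarrow> smooth_on U f \<Longrightarrow> smooth_on U g \<Longrightarrow> smooth_on U (\<lambda>q. prod (f q) (g q))"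
  by (simp add: smooth_on_iff_smooth_upto smooth_upto_bilinear)

lemmas smooth_on_mult = smooth_on_bilinear[OF bounded_bilinear_mult]
lemmas smooth_on_inner = smooth_on_bilinear[OF bounded_bilinear_inner]
lemmas smooth_on_cross3 = smooth_on_bilinear[OF bilinear_conv_bounded_bilinear[THEN iffD1, OF bilinear_cross]]

lemma smooth_on_exp: "open U \<Longrightarrow> smooth_on U f \<Longrightarrow> smooth_on U (\<lambda>q. exp (f q :: real))"
  by (simp add: smooth_on_iff_smooth_upto smooth_upto_exp)

lemma smooth_on_inverse:
  "open U \<Longrightarrow> (\<And>q. q \<in> U \<Longrightarrow> f q \<noteq> 0) \<Longrightarrow> smooth_on U f \<Longrightarrow> smooth_on U (\<lambda>q. inverse (f q :: real))"
  by (simp add: smooth_on_iff_smooth_upto smooth_upto_inverse)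

lemma smooth_on_ln:
  "open U \<Longrightarrow> (\<And>q. q \<in> U \<Longrightarrow> f q > 0) \<Longrightarrow> smooth_on U f \<Longrightarrow> smooth_on U (\<lambda>q. ln (f q :: real))"
  by (simp add: smooth_on_iff_smooth_upto smooth_upto_ln)

lemma smooth_on_arctan: "open U \<Longrightarrow> smooth_on U f \<Longrightarrow> smooth_on U (\<lambda>q. arctan (f q :: real))"
  by (simp add: smooth_on_iff_smooth_upto smooth_upto_arctan)

lemma smooth_on_minus: "open U \<Longrightarrow> smooth_on U f \<Longrightarrow> smooth_on U (\<lambda>q. - f q :: real)"
  using smooth_on_mult[of U "\<lambda>q. - 1" f] smooth_on_const[of U "- 1 :: real"] by simp

lemma smooth_on_diff:
  "open U \<Longrightarrow> smooth_on U f \<Longrightarrow> smooth_on U g \<Longrightarrow> smooth_on U (\<lambda>q. f q - g q :: real)"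
  using smooth_on_add[OF _ _ smooth_on_minus, of U f g] by simp

lemma smooth_on_divide:
  "open U \<Longrightarrow> (\<And>q. q \<in> U \<Longrightarrow> g q \<noteq> 0) \<Longrightarrow> smooth_on U f \<Longrightarrow> smooth_on U g \<Longrightarrow> smooth_on U (\<lambda>q. f q / g q :: real)"
  using smooth_on_mult[OF _ _ smooth_on_inverse, of U f g] by (simp add: divide_inverse)

section \<open>Symmetry of mixed partial derivatives\<close>

lemma square_subset_ball:
  assumes "2 * t < d"
  shows "{a..a + t} \<times> {b..b + t} \<subseteq> ball (a, b) d"
proof clarify
  fix u v assume uv: "u \<in> {a..a + t}" "v \<in> {b..b + t}"
  have "dist (a, b) (u, v) \<le> \<bar>a - u\<bar> + \<bar>b - v\<bar>"
    using sqrt_sum_squares_le_sum_abs by (simp add: dist_Pair_Pair dist_real_def)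
  also have "\<dots> < d"
    using uv assms by auto
  finally show "(u, v) \<in> ball (a, b) d"
    by simp
qed

lemma square_difference_dy_dx:
  fixes f :: "real \<times> real \<Rightarrow> real"
  assumes U: "open U" "{a..a + t} \<times> {b..b + t} \<subseteq> U" and t: "t > 0"
    and f: "f differentiable_on U" "dx f differentiable_on U"
  obtains z w where "z \<in> {a..a + t}" "w \<in> {b..b + t}"
    "f (a + t, b + t) - f (a + t, b) - f (a, b + t) + f (a, b) = t * t * dy (dx f) (z, w)"
proof -
  have "\<exists>z>a. z < a + t \<and> (f (a + t, b + t) - f (a + t, b)) - (f (a, b + t) - f (a, b))
      = (a + t - a) * (dx f (z, b + t) - dx f (z, b))"
  proof (rule MVT2)
    fix u assume "a \<le> u" "u \<le> a + t"
    then have "(u, b + t) \<in> U" "(u, b) \<in> U"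
      using U t by auto
    then show "((\<lambda>u. f (u, b + t) - f (u, b)) has_real_derivative dx f (u, b + t) - dx f (u, b)) (at u)"
      using has_real_derivative_dx[OF U(1) _ f(1)] by (auto intro!: derivative_intros)
  qed (use t in simp)
  then obtain z where z: "a < z" "z < a + t"
    "f (a + t, b + t) - f (a + t, b) - f (a, b + t) + f (a, b) = t * (dx f (z, b + t) - dx f (z, b))"
    by auto
  have "\<exists>w>b. w < b + t \<and> dx f (z, b + t) - dx f (z, b) = (b + t - b) * dy (dx f) (z, w)"
  proof (rule MVT2)
    fix v assume "b \<le> v" "v \<le> b + t"
    then have "(z, v) \<in> U"
      using U z by auto
    then show "((\<lambda>v. dx f (z, v)) has_real_derivative dy (dx f) (z, v)) (at v)"
      using has_real_derivative_dy[OF U(1) _ f(2), of "(z, v)"] by simp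
  qed (use t in simp)
  then obtain w where "b < w" "w < b + t" "dx f (z, b + t) - dx f (z, b) = t * dy (dx f) (z, w)"
    by auto
  then show ?thesis
    using that[of z w] z by simp
qed

lemma square_difference_dx_dy:
  fixes f :: "real \<times> real \<Rightarrow> real"
  assumes U: "open U" "{a..a + t} \<times> {b..b + t} \<subseteq> U" and t: "t > 0"
    and f: "f differentiable_on U" "dy f differentiable_on U"
  obtains z w where "z \<in> {a..a + t}" "w \<in> {b..b + t}"
    "f (a + t, b + t) - f (a + t, b) - f (a, b + t) + f (a, b) = t * t * dx (dy f) (z, w)"
proof -
  have "\<exists>w>b. w < b + t \<and> (f (a + t, b + t) - f (a, b + t)) - (f (a + t, b) - f (a, b))
      = (b + t - b) * (dy f (a + t, w) - dy f (a, w))"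
  proof (rule MVT2)
    fix v assume "b \<le> v" "v \<le> b + t"
    then have "(a + t, v) \<in> U" "(a, v) \<in> U"
      using U t by auto
    then show "((\<lambda>v. f (a + t, v) - f (a, v)) has_real_derivative dy f (a + t, v) - dy f (a, v)) (at v)"
      using has_real_derivative_dy[OF U(1) _ f(1)] by (auto intro!: derivative_intros)
  qed (use t in simp)
  then obtain w where w: "b < w" "w < b + t"
    "f (a + t, b + t) - f (a + t, b) - f (a, b + t) + f (a, b) = t * (dy f (a + t, w) - dy f (a, w))"
    by (auto simp: algebra_simps)
  have "\<exists>z>a. z < a + t \<and> dy f (a + t, w) - dy f (a, w) = (a + t - a) * dx (dy f) (z, w)"
  proof (rule MVT2)
    fix u assume "a \<le> u" "u \<le> a + t"
    then have "(u, w) \<in> U"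
      using U w by auto
    then show "((\<lambda>u. dy f (u, w)) has_real_derivative dx (dy f) (u, w)) (at u)"
      using has_real_derivative_dx[OF U(1) _ f(2), of "(u, w)"] by simp
  qed (use t in simp)
  then obtain z where "a < z" "z < a + t" "dy f (a + t, w) - dy f (a, w) = t * dx (dy f) (z, w)"
    by auto
  then show ?thesis
    using that[of z w] w by simp
qed

lemma smooth_upto_3_D:
  "smooth_upto 3 U f \<Longrightarrow> f differentiable_on U \<and> dx f differentiable_on U \<and> dy f differentiable_on U
    \<and> dy (dx f) differentiable_on U \<and> dx (dy f) differentiable_on U"
  by (simp add: smooth_upto_Suc numeral_3_eq_3 numeral_2_eq_2)

lemma mixed_partials_meet_near:
  fixes f :: "real \<times> real \<Rightarrow> real"
  assumes U: "open U" "p \<in> U" and f: "smooth_upto 3 U f" and d: "d > 0"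
  obtains z w where "dist z p < d" "dist w p < d" "dy (dx f) z = dx (dy f) w"
proof -
  obtain d' where d': "d' > 0" "ball p d' \<subseteq> U"
    using U open_contains_ball by blast
  define t where "t = min d d' / 4"
  have t: "t > 0" "2 * t < min d d'"
    using d d' unfolding t_def by auto
  obtain a b where p: "p = (a, b)"
    by fastforce
  have square: "{a..a + t} \<times> {b..b + t} \<subseteq> ball p (min d d')"
    using square_subset_ball[OF t(2)] p by simp
  then have "{a..a + t} \<times> {b..b + t} \<subseteq> U"
    using d'(2) subset_ball[of "min d d'" d' p] by auto
  then obtain z1 w1 z2 w2
    where zw: "(z1, w1) \<in> {a..a + t} \<times> {b..b + t}" "(z2, w2) \<in> {a..a + t} \<times> {b..b + t}"
      and "t * t * dy (dx f) (z1, w1) = t * t * dx (dy f) (z2, w2)"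
    using square_difference_dy_dx[OF U(1) _ t(1)] square_difference_dx_dy[OF U(1) _ t(1)]
      smooth_upto_3_D[OF f] by (metis SigmaI)
  moreover have "dist (z1, w1) p < d" "dist (z2, w2) p < d"
    using square zw by (auto simp: dist_commute subset_iff)
  ultimately show ?thesis
    using that t(1) by simp
qed

lemma dy_dx_eq_dx_dy_real:
  fixes f :: "real \<times> real \<Rightarrow> real"
  assumes U: "open U" "p \<in> U" and f: "smooth_upto 3 U f"
  shows "dy (dx f) p = dx (dy f) p"
proof -
  have cont: "isCont (dy (dx f)) p" "isCont (dx (dy f)) p"
    using smooth_upto_3_D[OF f] U differentiable_imp_continuous_on continuous_on_eq_continuous_at
    by blast+
  have "\<bar>dy (dx f) p - dx (dy f) p\<bar> \<le> e" if e: "e > 0" for e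
  proof -
    have "e / 2 > 0"
      using e by simp
    then obtain d1 d2 where d1: "d1 > 0" "\<And>z. dist z p < d1 \<Longrightarrow> dist (dy (dx f) z) (dy (dx f) p) < e / 2"
      and d2: "d2 > 0" "\<And>w. dist w p < d2 \<Longrightarrow> dist (dx (dy f) w) (dx (dy f) p) < e / 2"
      using cont unfolding continuous_at_eps_delta by blast
    have "min d1 d2 > 0"
      using d1(1) d2(1) by simp
    then obtain z w where "dist z p < min d1 d2" "dist w p < min d1 d2" "dy (dx f) z = dx (dy f) w"
      by (rule mixed_partials_meet_near[OF U f])
    then have "\<bar>dy (dx f) z - dy (dx f) p\<bar> < e / 2" "\<bar>dx (dy f) w - dx (dy f) p\<bar> < e / 2"
      using d1(2)[of z] d2(2)[of w] by (simp_all add: dist_real_def)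
    then show ?thesis
      using \<open>dy (dx f) z = dx (dy f) w\<close> by arith
  qed
  then show ?thesis
    by (metis abs_le_zero_iff field_le_epsilon add_0 eq_iff_diff_eq_0)
qed

lemma dy_dx_eq_dx_dy:
  fixes F :: "real \<times> real \<Rightarrow> 'a::real_inner"
  assumes U: "open U" "p \<in> U" and F: "smooth_upto 3 U F"
  shows "dy (dx F) p = dx (dy F) p"
proof -
  have F': "F differentiable_on U" "dx F differentiable_on U" "dy F differentiable_on U"
    using smooth_upto_3_D[OF F] by auto
  have "dy (dx F) p \<bullet> v = dx (dy F) p \<bullet> v" for v
  proof -
    have dx_v: "dx (\<lambda>q. G q \<bullet> v) q = dx G q \<bullet> v" and dy_v: "dy (\<lambda>q. G q \<bullet> v) q = dy G q \<bullet> v"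
      if "q \<in> U" "G differentiable_on U" for G :: "real \<times> real \<Rightarrow> 'a" and q
      using dx_inner[OF U(1) that(1) that(2), of "\<lambda>q. v"] dy_inner[OF U(1) that(1) that(2), of "\<lambda>q. v"]
      by simp_all
    have "dy (dx F) p \<bullet> v = dy (\<lambda>q. dx F q \<bullet> v) p"
      by (rule dy_v[OF U(2) F'(2), symmetric])
    also have "\<dots> = dy (dx (\<lambda>q. F q \<bullet> v)) p"
      by (rule dy_cong[OF U]) (rule dx_v[OF _ F'(1), symmetric])
    also have "\<dots> = dx (dy (\<lambda>q. F q \<bullet> v)) p"
      by (rule dy_dx_eq_dx_dy_real[OF U smooth_upto_bilinear[OF bounded_bilinear_inner U(1) F smooth_upto_const]])
    also have "\<dots> = dx (\<lambda>q. dy F q \<bullet> v) p"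
      by (rule dx_cong[OF U]) (rule dy_v[OF _ F'(1)])
    also have "\<dots> = dx (dy F) p \<bullet> v"
      by (rule dx_v[OF U(2) F'(3)])
    finally show ?thesis .
  qed
  then have "(dy (dx F) p - dx (dy F) p) \<bullet> (dy (dx F) p - dx (dy F) p) = 0"
    by (simp add: inner_diff_left)
  then show ?thesis
    by simp
qed

lemma smooth_on_dy_dx_eq_dx_dy:
  fixes F :: "real \<times> real \<Rightarrow> 'a::real_inner"
  shows "open U \<Longrightarrow> p \<in> U \<Longrightarrow> smooth_on U F \<Longrightarrow> dy (dx F) p = dx (dy F) p"
  by (rule dy_dx_eq_dx_dy) (auto intro: smooth_on_imp_smooth_upto)

section \<open>The Gauss--Codazzi equations of a curvature line frame\<close>

lemma cross3_cross3_left: "cross3 (cross3 a b) c = (a \<bullet> c) *\<^sub>R b - (b \<bullet> c) *\<^sub>R a"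
  by (simp add: cross3_simps forall_3)

lemma orthonormal_frame_expansion:
  fixes X Y u :: "real^3"
  assumes "norm X = 1" "norm Y = 1" "X \<bullet> Y = 0"
  shows "u = (u \<bullet> X) *\<^sub>R X + (u \<bullet> Y) *\<^sub>R Y + (u \<bullet> cross3 X Y) *\<^sub>R cross3 X Y"
proof -
  let ?N = "cross3 X Y"
  have XY: "X \<bullet> X = 1" "Y \<bullet> Y = 1"
    using assms by (simp_all add: dot_square_norm)
  have "(norm ?N)\<^sup>2 = 1"
    using norm_cross_dot[of X Y] assms by simp
  then have N: "norm ?N = 1"
    by (smt (verit) norm_ge_zero power2_eq_1_iff)
  then have NN: "?N \<bullet> ?N = 1"
    by (simp add: dot_square_norm)
  have NXY: "?N \<bullet> X = 0" "?N \<bullet> Y = 0"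
    using dot_cross_self by (auto simp: inner_commute)
  define w where "w = u - ((u \<bullet> X) *\<^sub>R X + (u \<bullet> Y) *\<^sub>R Y + (u \<bullet> ?N) *\<^sub>R ?N)"
  have "w \<bullet> X = 0" "w \<bullet> Y = 0" "w \<bullet> ?N = 0"
    unfolding w_def using XY NN NXY assms(3)
    by (simp_all add: inner_diff_left inner_add_left inner_diff_right inner_add_right inner_commute)
  then have "cross3 ?N w = 0"
    by (simp add: cross3_cross3_left inner_commute)
  then have "w = 0"
    using norm_cross_dot[of ?N w] N \<open>w \<bullet> ?N = 0\<close> by (simp add: inner_commute)
  then show ?thesis
    unfolding w_def by simp
qed

lemma inner_orthonormal_frame:
  fixes X Y u v :: "real^3"
  assumes "norm X = 1" "norm Y = 1" "X \<bullet> Y = 0"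
  shows "u \<bullet> v = (u \<bullet> X) * (v \<bullet> X) + (u \<bullet> Y) * (v \<bullet> Y) + (u \<bullet> cross3 X Y) * (v \<bullet> cross3 X Y)"
  by (subst orthonormal_frame_expansion[OF assms, of u])
    (simp add: inner_add_left inner_add_right inner_commute mult.commute)

lemma dx_inner_eq_0_if_constant_on:
  fixes F G :: "real \<times> real \<Rightarrow> 'a::real_inner"
  assumes "open U" "p \<in> U" "F differentiable_on U" "G differentiable_on U" "\<And>q. q \<in> U \<Longrightarrow> F q \<bullet> G q = c"
  shows "F p \<bullet> dx G p + dx F p \<bullet> G p = 0"
  using dx_inner[OF assms(1-4)] dx_eq_0_if_constant_on[OF assms(1,2,5)] by simp

lemma dy_inner_eq_0_if_constant_on:
  fixes F G :: "real \<times> real \<Rightarrow> 'a::real_inner"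
  assumes "open U" "p \<in> U" "F differentiable_on U" "G differentiable_on U" "\<And>q. q \<in> U \<Longrightarrow> F q \<bullet> G q = c"
  shows "F p \<bullet> dy G p + dy F p \<bullet> G p = 0"
  using dy_inner[OF assms(1-4)] dy_eq_0_if_constant_on[OF assms(1,2,5)] by simp

locale curvature_line_frame =
  fixes U :: "(real \<times> real) set"
    and r X Y :: "real \<times> real \<Rightarrow> real^3"
    and A1 A2 Hc Kc :: "real \<times> real \<Rightarrow> real"
  assumes open_U: "open U"
    and smooth_r: "smooth_on U r" and smooth_X: "smooth_on U X" and smooth_Y: "smooth_on U Y"
    and smooth_A1: "smooth_on U A1" and smooth_A2: "smooth_on U A2"
    and A_nz: "\<forall>p\<in>U. A1 p \<noteq> 0 \<and> A2 p \<noteq> 0"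
    and frame: "\<forall>p\<in>U. norm (X p) = 1 \<and> norm (Y p) = 1 \<and> X p \<bullet> Y p = 0"
    and r_x: "\<forall>p\<in>U. dx r p = A1 p *\<^sub>R X p"
    and r_y: "\<forall>p\<in>U. dy r p = A2 p *\<^sub>R Y p"
    and N_x: "\<forall>p\<in>U. dx (\<lambda>q. cross3 (X q) (Y q)) p = Hc p *\<^sub>R X p"
    and N_y: "\<forall>p\<in>U. dy (\<lambda>q. cross3 (X q) (Y q)) p = Kc p *\<^sub>R Y p"
begin

abbreviation N :: "real \<times> real \<Rightarrow> real^3" where
  "N \<equiv> \<lambda>q. cross3 (X q) (Y q)"

lemma A1_nz: "p \<in> U \<Longrightarrow> A1 p \<noteq> 0"
  and A2_nz: "p \<in> U \<Longrightarrow> A2 p \<noteq> 0"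
  using A_nz by auto

lemma frame_inner:
  assumes "p \<in> U"
  shows "X p \<bullet> X p = 1" "Y p \<bullet> Y p = 1" "X p \<bullet> Y p = 0"
  using frame assms by (auto simp: dot_square_norm)

lemma N_inner: "N q \<bullet> X q = 0" "N q \<bullet> Y q = 0"
  using dot_cross_self by (auto simp: inner_commute)

lemma Hc_eq: "p \<in> U \<Longrightarrow> Hc p = dx N p \<bullet> X p"
  using N_x frame_inner by simp

lemma Kc_eq: "p \<in> U \<Longrightarrow> Kc p = dy N p \<bullet> Y p"
  using N_y frame_inner by simp

lemma smooth_N: "smooth_on U N"
  by (rule smooth_on_cross3[OF open_U smooth_X smooth_Y])

lemma smooth_Hc: "smooth_on U Hc"
  using smooth_on_inner[OF open_U smooth_on_dx[OF smooth_N] smooth_X]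
  by (rule smooth_on_cong[OF open_U, rotated]) (simp add: Hc_eq)

lemma smooth_Kc: "smooth_on U Kc"
  using smooth_on_inner[OF open_U smooth_on_dy[OF smooth_N] smooth_Y]
  by (rule smooth_on_cong[OF open_U, rotated]) (simp add: Kc_eq)

lemma differentiable_frame:
  "X differentiable_on U" "Y differentiable_on U" "N differentiable_on U"
  "dx X differentiable_on U" "dy X differentiable_on U" "dx Y differentiable_on U" "dy Y differentiable_on U"
  "dx N differentiable_on U" "dy N differentiable_on U"
  "A1 differentiable_on U" "A2 differentiable_on U" "Hc differentiable_on U" "Kc differentiable_on U"
  by (intro smooth_on_imp_differentiable_on smooth_on_dx smooth_on_dy smooth_X smooth_Y smooth_N
      smooth_A1 smooth_A2 smooth_Hc smooth_Kc)+

lemma frame_derivatives: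
  assumes p: "p \<in> U"
  shows "dx X p \<bullet> X p = 0" "dy X p \<bullet> X p = 0" "dx Y p \<bullet> Y p = 0" "dy Y p \<bullet> Y p = 0"
    and "X p \<bullet> dx Y p + dx X p \<bullet> Y p = 0" "X p \<bullet> dy Y p + dy X p \<bullet> Y p = 0"
    and "N p \<bullet> dx X p = - Hc p" "N p \<bullet> dy X p = 0" "N p \<bullet> dx Y p = 0" "N p \<bullet> dy Y p = - Kc p"
  using dx_inner_eq_0_if_constant_on[OF open_U p differentiable_frame(1,1) frame_inner(1)]
    dy_inner_eq_0_if_constant_on[OF open_U p differentiable_frame(1,1) frame_inner(1)]
    dx_inner_eq_0_if_constant_on[OF open_U p differentiable_frame(2,2) frame_inner(2)]
    dy_inner_eq_0_if_constant_on[OF open_U p differentiable_frame(2,2) frame_inner(2)]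
    dx_inner_eq_0_if_constant_on[OF open_U p differentiable_frame(1,2) frame_inner(3)]
    dy_inner_eq_0_if_constant_on[OF open_U p differentiable_frame(1,2) frame_inner(3)]
    dx_inner_eq_0_if_constant_on[OF open_U p differentiable_frame(3,1) N_inner(1)]
    dy_inner_eq_0_if_constant_on[OF open_U p differentiable_frame(3,1) N_inner(1)]
    dx_inner_eq_0_if_constant_on[OF open_U p differentiable_frame(3,2) N_inner(2)]
    dy_inner_eq_0_if_constant_on[OF open_U p differentiable_frame(3,2) N_inner(2)]
    N_x N_y frame_inner[OF p] p
  by (auto simp: inner_commute)

lemma dy_A1_eq: "p \<in> U \<Longrightarrow> dy A1 p = A2 p * (dx Y p \<bullet> X p)"
  and dx_A2_eq: "p \<in> U \<Longrightarrow> dx A2 p = A1 p * (dy X p \<bullet> Y p)"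
proof -
  assume p: "p \<in> U"
  have "A1 p *\<^sub>R dy X p + dy A1 p *\<^sub>R X p = dy (\<lambda>q. A1 q *\<^sub>R X q) p"
    by (rule dy_scaleR[OF open_U p, symmetric]) (rule differentiable_frame)+
  also have "\<dots> = dy (dx r) p"
    using r_x by (intro dy_cong[OF open_U p]) auto
  also have "\<dots> = dx (dy r) p"
    by (rule smooth_on_dy_dx_eq_dx_dy[OF open_U p smooth_r])
  also have "\<dots> = dx (\<lambda>q. A2 q *\<^sub>R Y q) p"
    using r_y by (intro dx_cong[OF open_U p]) auto
  also have "\<dots> = A2 p *\<^sub>R dx Y p + dx A2 p *\<^sub>R Y p"
    by (rule dx_scaleR[OF open_U p]) (rule differentiable_frame)+
  finally have r_xy: "A1 p *\<^sub>R dy X p + dy A1 p *\<^sub>R X p = A2 p *\<^sub>R dx Y p + dx A2 p *\<^sub>R Y p" .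
  from arg_cong[OF r_xy, of "\<lambda>v. v \<bullet> X p"] show "dy A1 p = A2 p * (dx Y p \<bullet> X p)"
    using frame_derivatives[OF p] frame_inner[OF p] by (simp add: inner_add_left inner_add_right inner_commute)
  from arg_cong[OF r_xy, of "\<lambda>v. v \<bullet> Y p"] show "dx A2 p = A1 p * (dy X p \<bullet> Y p)"
    using frame_derivatives[OF p] frame_inner[OF p] by (simp add: inner_add_left inner_add_right inner_commute)
qed

lemma codazzi_Hc: "p \<in> U \<Longrightarrow> dy Hc p = dy A1 p / A2 p * Kc p"
proof -
  assume p: "p \<in> U"
  have "dy Hc p = dy (\<lambda>q. dx N q \<bullet> X q) p"
    using Hc_eq by (intro dy_cong[OF open_U p]) auto
  also have "\<dots> = dx N p \<bullet> dy X p + dy (dx N) p \<bullet> X p"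
    by (rule dy_inner[OF open_U p]) (rule differentiable_frame)+
  also have "dy (dx N) p = dx (dy N) p"
    by (rule smooth_on_dy_dx_eq_dx_dy[OF open_U p smooth_N])
  also have "dx (dy N) p = dx (\<lambda>q. Kc q *\<^sub>R Y q) p"
    using N_y by (intro dx_cong[OF open_U p]) auto
  also have "\<dots> = Kc p *\<^sub>R dx Y p + dx Kc p *\<^sub>R Y p"
    by (rule dx_scaleR[OF open_U p]) (rule differentiable_frame)+
  finally show ?thesis
    using N_x p frame_derivatives[OF p] frame_inner[OF p] dy_A1_eq[OF p] A2_nz[OF p]
    by (simp add: inner_add_left inner_add_right inner_commute)
qed

lemma codazzi_Kc: "p \<in> U \<Longrightarrow> dx Kc p = dx A2 p / A1 p * Hc p"
proof -
  assume p: "p \<in> U"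
  have "dx Kc p = dx (\<lambda>q. dy N q \<bullet> Y q) p"
    using Kc_eq by (intro dx_cong[OF open_U p]) auto
  also have "\<dots> = dy N p \<bullet> dx Y p + dx (dy N) p \<bullet> Y p"
    by (rule dx_inner[OF open_U p]) (rule differentiable_frame)+
  also have "dx (dy N) p = dy (dx N) p"
    by (rule smooth_on_dy_dx_eq_dx_dy[OF open_U p smooth_N, symmetric])
  also have "dy (dx N) p = dy (\<lambda>q. Hc q *\<^sub>R X q) p"
    using N_x by (intro dy_cong[OF open_U p]) auto
  also have "\<dots> = Hc p *\<^sub>R dy X p + dy Hc p *\<^sub>R X p"
    by (rule dy_scaleR[OF open_U p]) (rule differentiable_frame)+
  finally show ?thesis
    using N_y p frame_derivatives[OF p] frame_inner[OF p] dx_A2_eq[OF p] A1_nz[OF p]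
    by (simp add: inner_add_left inner_add_right inner_commute)
qed

lemma gauss:
  assumes p: "p \<in> U"
  shows "dy (\<lambda>q. dy A1 q / A2 q) p + dx (\<lambda>q. dx A2 q / A1 q) p + Hc p * Kc p = 0"
proof -
  have "dy (\<lambda>q. dy A1 q / A2 q) p = dy (\<lambda>q. dx Y q \<bullet> X q) p"
    using dy_A1_eq A2_nz by (intro dy_cong[OF open_U p]) auto
  also have "\<dots> = dx Y p \<bullet> dy X p + dy (dx Y) p \<bullet> X p"
    by (rule dy_inner[OF open_U p]) (rule differentiable_frame)+
  finally have p_y: "dy (\<lambda>q. dy A1 q / A2 q) p = dx Y p \<bullet> dy X p + dy (dx Y) p \<bullet> X p" .
  have "dx (\<lambda>q. dx A2 q / A1 q) p = dx (\<lambda>q. dy X q \<bullet> Y q) p"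
    using dx_A2_eq A1_nz by (intro dx_cong[OF open_U p]) auto
  also have "\<dots> = dy X p \<bullet> dx Y p + dx (dy X) p \<bullet> Y p"
    by (rule dx_inner[OF open_U p]) (rule differentiable_frame)+
  finally have q_x: "dx (\<lambda>q. dx A2 q / A1 q) p = dy X p \<bullet> dx Y p + dx (dy X) p \<bullet> Y p" .
  have "dy (\<lambda>q. X q \<bullet> dx Y q + dx X q \<bullet> Y q) p = 0"
    using frame_derivatives(5) by (rule dy_eq_0_if_constant_on[OF open_U p])
  moreover have "dy (\<lambda>q. X q \<bullet> dx Y q + dx X q \<bullet> Y q) p
      = X p \<bullet> dy (dx Y) p + dy X p \<bullet> dx Y p + (dx X p \<bullet> dy Y p + dy (dx X) p \<bullet> Y p)"
    using dy_add[OF open_U p, of "\<lambda>q. X q \<bullet> dx Y q" "\<lambda>q. dx X q \<bullet> Y q"]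
      dy_inner[OF open_U p, of X "dx Y"] dy_inner[OF open_U p, of "dx X" Y]
    by (simp add: differentiable_frame differentiable_on_bilinear[OF bounded_bilinear_inner open_U])
  ultimately have xy_yx: "X p \<bullet> dy (dx Y) p + dy X p \<bullet> dx Y p + (dx X p \<bullet> dy Y p + dy (dx X) p \<bullet> Y p) = 0"
    by simp
  have fr: "norm (X p) = 1" "norm (Y p) = 1" "X p \<bullet> Y p = 0"
    using frame p by auto
  have "dy X p \<bullet> dx Y p = 0" "dx X p \<bullet> dy Y p = Hc p * Kc p"
    using inner_orthonormal_frame[OF fr, of "dy X p" "dx Y p"] inner_orthonormal_frame[OF fr, of "dx X p" "dy Y p"]
      frame_derivatives[OF p]
    by (simp_all add: inner_commute)
  then show ?thesis
    using p_y q_x xy_yx smooth_on_dy_dx_eq_dx_dy[OF open_U p smooth_X] by (simp add: inner_commute)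
qed

end

section \<open>Membrane O surfaces of the 2nd kind\<close>

lemma second_kind_identity:
  fixes a1 a2 hc kc t1 t2 qn :: real
  assumes nz: "a1 \<noteq> 0" "a2 \<noteq> 0" "qn \<noteq> 0"
    and normal: "(- hc / a1) * t1 + (- kc / a2) * t2 + qn = 0"
    and kind_x: "2 * (t2 * a1) * hc - qn * a1\<^sup>2 = - qn"
    and kind_y: "2 * (t1 * a2) * kc - qn * a2\<^sup>2 = - qn"
  shows "(hc * a2 - kc * a1)\<^sup>2 = hc\<^sup>2 + kc\<^sup>2"
proof -
  have "hc * a2 * t1 + kc * a1 * t2 = qn * a1 * a2"
    using normal nz by (simp add: field_simps)
  then have "qn * (hc\<^sup>2 + kc\<^sup>2 - (hc * a2 - kc * a1)\<^sup>2) =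
      hc\<^sup>2 * (2 * (t1 * a2) * kc - qn * a2\<^sup>2 + qn) + kc\<^sup>2 * (2 * (t2 * a1) * hc - qn * a1\<^sup>2 + qn)"
    by algebra
  then show ?thesis
    using kind_x kind_y nz by simp
qed

lemma sin_cos_double_arctan:
  fixes s c :: real
  assumes "s\<^sup>2 + c\<^sup>2 = 1" "c \<noteq> -1"
  shows "sin (2 * arctan (s / (1 + c))) = s" "cos (2 * arctan (s / (1 + c))) = c"
proof -
  obtain t where t: "0 \<le> t" "t < 2 * pi" "c = cos t" "s = sin t"
    using sincos_total_2pi[of c s] assms(1) by (auto simp: add.commute)
  define \<theta> where "\<theta> = (if t < pi then t else t - 2 * pi)"
  have "t \<noteq> pi"
    using assms(2) t(3) by auto
  then have \<theta>: "- pi < \<theta>" "\<theta> < pi"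
    using t pi_gt_zero unfolding \<theta>_def by auto
  have sc: "sin \<theta> = s" "cos \<theta> = c"
    using t by (simp_all add: \<theta>_def sin_diff cos_diff)
  have "tan (\<theta> / 2) = s / (1 + c)"
    using tan_half[of "\<theta> / 2"] sc by (simp add: add.commute)
  then have "2 * arctan (s / (1 + c)) = \<theta>"
    using arctan_tan[of "\<theta> / 2"] \<theta> by simp
  then show "sin (2 * arctan (s / (1 + c))) = s" "cos (2 * arctan (s / (1 + c))) = c"
    using sc by simp_all
qed

lemma xi_compatibility_algebra:
  fixes S C h x y ax ay Z :: real
  assumes nz: "S \<noteq> 0" "C \<noteq> 0" and one: "S\<^sup>2 + C\<^sup>2 = 1"
    and eq: "((h - S / C) * y - ay / S\<^sup>2) * x + (h + C / S) * Z = ((h + C / S) * x - ax / C\<^sup>2) * y + (h - S / C) * Z"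
  shows "Z = x * y + C / S * ay * x - S / C * ax * y"
proof -
  have k: "C / S + S / C = 1 / (S * C)"
    using nz one by (simp add: field_simps power2_eq_square add.commute)
  have "(C / S + S / C) * Z = (C / S + S / C) * (x * y) + ay * x / S\<^sup>2 - ax * y / C\<^sup>2"
    using eq by (simp add: algebra_simps)
  then have Z: "Z / (S * C) = (C / S + S / C) * (x * y) + ay * x / S\<^sup>2 - ax * y / C\<^sup>2"
    unfolding k by simp
  have "Z = S * C * (Z / (S * C))"
    using nz by simp
  also have "\<dots> = S * C * ((C / S + S / C) * (x * y) + ay * x / S\<^sup>2 - ax * y / C\<^sup>2)"
    unfolding Z ..
  also have "\<dots> = x * y + C / S * ay * x - S / C * ax * y"
    using k nz by (simp add: field_simps power2_eq_square)
  finally show ?thesis .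
qed

locale membrane_O_surface_2nd_kind = curvature_line_frame +
  fixes T1 T2 :: "real \<times> real \<Rightarrow> real" and qn :: real
  assumes curv_nz: "\<forall>p\<in>U. Hc p \<noteq> 0 \<and> Kc p \<noteq> 0"
    and qn_nz: "qn \<noteq> 0"
    and eq3: "\<forall>p\<in>U. (- Hc p / A1 p) * T1 p + (- Kc p / A2 p) * T2 p + qn = 0"
    and kind2_x: "\<forall>p\<in>U. 2 * (T2 p * A1 p) * Hc p - qn * (A1 p)\<^sup>2 = - qn"
    and kind2_y: "\<forall>p\<in>U. 2 * (T1 p * A2 p) * Kc p - qn * (A2 p)\<^sup>2 = - qn"
begin

definition \<xi> :: "real \<times> real \<Rightarrow> real" where
  "\<xi> q = ln ((Hc q)\<^sup>2 + (Kc q)\<^sup>2) / 2"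

definition \<sigma> :: "real \<times> real \<Rightarrow> real" where
  "\<sigma> q = (Hc q * A2 q - Kc q * A1 q) * exp (- \<xi> q)"

text \<open>The unit vector \<open>exp (- \<xi>) * (Hc, - \<sigma> * Kc)\<close> is \<open>(sin \<alpha>, cos \<alpha>)\<close>; the half-angle formula
  recovers \<open>\<alpha>\<close> smoothly, and \<open>h\<close> is then forced by \<open>A1 = cos \<alpha> + h * sin \<alpha>\<close>.\<close>

definition \<alpha> :: "real \<times> real \<Rightarrow> real" where
  "\<alpha> q = 2 * arctan (Hc q / (exp (\<xi> q) - \<sigma> q * Kc q))"

definition h :: "real \<times> real \<Rightarrow> real" where
  "h q = (exp (\<xi> q) * A1 q + \<sigma> q * Kc q) / Hc q"

lemma Hc_Kc_sq_pos: "q \<in> U \<Longrightarrow> (Hc q)\<^sup>2 + (Kc q)\<^sup>2 > 0"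
  using curv_nz by (simp add: add_pos_nonneg)

lemma exp_xi_sq: "q \<in> U \<Longrightarrow> (exp (\<xi> q))\<^sup>2 = (Hc q)\<^sup>2 + (Kc q)\<^sup>2"
  using Hc_Kc_sq_pos by (simp add: \<xi>_def power2_eq_square exp_add[symmetric])

lemma sigma_sq: "q \<in> U \<Longrightarrow> (\<sigma> q)\<^sup>2 = 1"
proof -
  assume q: "q \<in> U"
  have "(Hc q * A2 q - Kc q * A1 q)\<^sup>2 = (Hc q)\<^sup>2 + (Kc q)\<^sup>2"
    using second_kind_identity A_nz qn_nz eq3 kind2_x kind2_y q by blast
  moreover have "(\<sigma> q)\<^sup>2 = (Hc q * A2 q - Kc q * A1 q)\<^sup>2 / (exp (\<xi> q))\<^sup>2"
    by (simp add: \<sigma>_def power_mult_distrib exp_minus power_inverse divide_inverse)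
  ultimately show ?thesis
    using exp_xi_sq[OF q] curv_nz q by simp
qed

lemma sigma_nz: "q \<in> U \<Longrightarrow> \<sigma> q \<noteq> 0"
  using sigma_sq by fastforce

lemma alpha_denominator_nz: "q \<in> U \<Longrightarrow> exp (\<xi> q) - \<sigma> q * Kc q \<noteq> 0"
proof
  assume q: "q \<in> U" and "exp (\<xi> q) - \<sigma> q * Kc q = 0"
  then have "(exp (\<xi> q))\<^sup>2 = (\<sigma> q)\<^sup>2 * (Kc q)\<^sup>2"
    by (simp add: power_mult_distrib)
  then show False
    using exp_xi_sq[OF q] sigma_sq[OF q] curv_nz q by simp
qed

lemma sin_cos_alpha:
  assumes q: "q \<in> U"
  shows "sin (\<alpha> q) = exp (- \<xi> q) * Hc q" "cos (\<alpha> q) = - exp (- \<xi> q) * \<sigma> q * Kc q"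
proof -
  define s c where "s = exp (- \<xi> q) * Hc q" and "c = - exp (- \<xi> q) * \<sigma> q * Kc q"
  have "s\<^sup>2 + c\<^sup>2 = (exp (- \<xi> q))\<^sup>2 * ((Hc q)\<^sup>2 + (\<sigma> q)\<^sup>2 * (Kc q)\<^sup>2)"
    by (simp add: s_def c_def power_mult_distrib algebra_simps)
  also have "\<dots> = (exp (- \<xi> q) * exp (\<xi> q))\<^sup>2"
    using exp_xi_sq[OF q] sigma_sq[OF q] by (simp add: power_mult_distrib)
  finally have sc: "s\<^sup>2 + c\<^sup>2 = 1"
    by (simp add: exp_minus_inverse mult.commute)
  have "1 + c = exp (- \<xi> q) * (exp (\<xi> q) - \<sigma> q * Kc q)"
    by (simp add: c_def exp_minus field_simps)
  then have "c \<noteq> -1" "s / (1 + c) = Hc q / (exp (\<xi> q) - \<sigma> q * Kc q)"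
    using alpha_denominator_nz[OF q] by (auto simp: s_def)
  then show "sin (\<alpha> q) = s" "cos (\<alpha> q) = c"
    using sin_cos_double_arctan[OF sc] by (simp_all add: \<alpha>_def)
qed

lemma sin_alpha_nz: "q \<in> U \<Longrightarrow> sin (\<alpha> q) \<noteq> 0"
  and cos_alpha_nz: "q \<in> U \<Longrightarrow> cos (\<alpha> q) \<noteq> 0"
  using sin_cos_alpha curv_nz sigma_sq by fastforce+

lemma Hc_rep: "q \<in> U \<Longrightarrow> Hc q = exp (\<xi> q) * sin (\<alpha> q)"
  by (simp add: sin_cos_alpha exp_minus)

lemma Kc_rep: "q \<in> U \<Longrightarrow> Kc q = - \<sigma> q * exp (\<xi> q) * cos (\<alpha> q)"
  using sigma_sq[of q] by (simp add: sin_cos_alpha exp_minus power2_eq_square field_simps)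

lemma A1_rep: "q \<in> U \<Longrightarrow> A1 q = cos (\<alpha> q) + h q * sin (\<alpha> q)"
  using curv_nz by (simp add: sin_cos_alpha h_def exp_minus field_simps)

lemma A2_rep: "q \<in> U \<Longrightarrow> A2 q = \<sigma> q * (sin (\<alpha> q) - h q * cos (\<alpha> q))"
proof -
  assume q: "q \<in> U"
  define E where "E = exp (\<xi> q)"
  have E: "E > 0" "E\<^sup>2 = (Hc q)\<^sup>2 + (Kc q)\<^sup>2" "\<sigma> q * E = Hc q * A2 q - Kc q * A1 q"
    using exp_xi_sq[OF q] by (simp_all add: E_def \<sigma>_def exp_minus)
  have "\<sigma> q * (sin (\<alpha> q) - h q * cos (\<alpha> q))
      = (\<sigma> q * (Hc q)\<^sup>2 + (\<sigma> q)\<^sup>2 * Kc q * (E * A1 q + \<sigma> q * Kc q)) / (Hc q * E)"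
    using curv_nz q E(1) by (simp add: sin_cos_alpha h_def exp_minus E_def[symmetric] field_simps power2_eq_square)
  also have "\<sigma> q * (Hc q)\<^sup>2 + (\<sigma> q)\<^sup>2 * Kc q * (E * A1 q + \<sigma> q * Kc q) = E * (\<sigma> q * E + Kc q * A1 q)"
    using sigma_sq[OF q] E(2) by algebra
  also have "E * (\<sigma> q * E + Kc q * A1 q) / (Hc q * E) = (\<sigma> q * E + Kc q * A1 q) / Hc q"
    using E(1) by simp
  also have "\<dots> = A2 q"
    using E(3) curv_nz q by simp
  finally show ?thesis ..
qed

lemma smooth_xi: "smooth_on U \<xi>"
  unfolding \<xi>_def[abs_def] power2_eq_square
  using Hc_Kc_sq_pos
  by (intro smooth_on_divide smooth_on_ln smooth_on_add smooth_on_mult smooth_on_const open_U smooth_Hc smooth_Kc)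
    (auto simp: power2_eq_square)

lemma smooth_sigma: "smooth_on U \<sigma>"
  unfolding \<sigma>_def[abs_def]
  by (intro smooth_on_mult smooth_on_diff smooth_on_exp smooth_on_minus open_U smooth_xi
      smooth_Hc smooth_Kc smooth_A1 smooth_A2)

lemma smooth_alpha: "smooth_on U \<alpha>"
  unfolding \<alpha>_def[abs_def]
  using alpha_denominator_nz
  by (intro smooth_on_mult smooth_on_const smooth_on_arctan smooth_on_divide smooth_on_diff smooth_on_exp
      open_U smooth_xi smooth_sigma smooth_Hc smooth_Kc) auto

lemma smooth_h: "smooth_on U h"
  unfolding h_def[abs_def]
  using curv_nz
  by (intro smooth_on_divide smooth_on_add smooth_on_mult smooth_on_exp open_U smooth_xi smooth_sigma
      smooth_Hc smooth_Kc smooth_A1) auto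

lemma differentiable_parameters:
  "\<xi> differentiable_on U" "\<sigma> differentiable_on U" "\<alpha> differentiable_on U" "h differentiable_on U"
  "dx \<xi> differentiable_on U" "dy \<xi> differentiable_on U"
  by (intro smooth_on_imp_differentiable_on smooth_on_dx smooth_on_dy smooth_xi smooth_sigma smooth_alpha smooth_h)+

lemma dx_sigma: "p \<in> U \<Longrightarrow> dx \<sigma> p = 0"
  and dy_sigma: "p \<in> U \<Longrightarrow> dy \<sigma> p = 0"
proof -
  assume p: "p \<in> U"
  have "\<sigma> q \<bullet> \<sigma> q = 1" if "q \<in> U" for q
    using sigma_sq[OF that] by (simp add: power2_eq_square)
  then have "2 * \<sigma> p * dx \<sigma> p = 0" "2 * \<sigma> p * dy \<sigma> p = 0"
    using dx_inner_eq_0_if_constant_on[OF open_U p differentiable_parameters(2,2)]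
      dy_inner_eq_0_if_constant_on[OF open_U p differentiable_parameters(2,2)]
    by simp_all
  then show "dx \<sigma> p = 0" "dy \<sigma> p = 0"
    using sigma_nz[OF p] by simp_all
qed

lemmas has_real_derivative_parameters =
  has_real_derivative_dx[OF open_U _ differentiable_parameters(1)]
  has_real_derivative_dx[OF open_U _ differentiable_parameters(2)]
  has_real_derivative_dx[OF open_U _ differentiable_parameters(3)]
  has_real_derivative_dx[OF open_U _ differentiable_parameters(4)]
  has_real_derivative_dy[OF open_U _ differentiable_parameters(1)]
  has_real_derivative_dy[OF open_U _ differentiable_parameters(2)]
  has_real_derivative_dy[OF open_U _ differentiable_parameters(3)]
  has_real_derivative_dy[OF open_U _ differentiable_parameters(4)]

lemma dx_Kc: "p \<in> U \<Longrightarrow> dx Kc p = - \<sigma> p * exp (\<xi> p) * (dx \<xi> p * cos (\<alpha> p) - sin (\<alpha> p) * dx \<alpha> p)"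
proof -
  assume p: "p \<in> U"
  have "dx Kc p = dx (\<lambda>q. - \<sigma> q * exp (\<xi> q) * cos (\<alpha> q)) p"
    using Kc_rep by (intro dx_cong[OF open_U p]) auto
  also have "\<dots> = - \<sigma> p * exp (\<xi> p) * (dx \<xi> p * cos (\<alpha> p) - sin (\<alpha> p) * dx \<alpha> p)"
    by (rule dx_eqI_real)
      (auto intro!: derivative_eq_intros has_real_derivative_parameters[OF p] simp: dx_sigma[OF p] algebra_simps)
  finally show ?thesis .
qed

lemma dx_A2: "p \<in> U \<Longrightarrow> dx A2 p = \<sigma> p * ((cos (\<alpha> p) + h p * sin (\<alpha> p)) * dx \<alpha> p - dx h p * cos (\<alpha> p))"
proof -
  assume p: "p \<in> U"
  have "dx A2 p = dx (\<lambda>q. \<sigma> q * (sin (\<alpha> q) - h q * cos (\<alpha> q))) p"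
    using A2_rep by (intro dx_cong[OF open_U p]) auto
  also have "\<dots> = \<sigma> p * ((cos (\<alpha> p) + h p * sin (\<alpha> p)) * dx \<alpha> p - dx h p * cos (\<alpha> p))"
    by (rule dx_eqI_real)
      (auto intro!: derivative_eq_intros has_real_derivative_parameters[OF p] simp: dx_sigma[OF p] algebra_simps)
  finally show ?thesis .
qed

lemma dy_Hc: "p \<in> U \<Longrightarrow> dy Hc p = exp (\<xi> p) * (dy \<xi> p * sin (\<alpha> p) + cos (\<alpha> p) * dy \<alpha> p)"
proof -
  assume p: "p \<in> U"
  have "dy Hc p = dy (\<lambda>q. exp (\<xi> q) * sin (\<alpha> q)) p"
    using Hc_rep by (intro dy_cong[OF open_U p]) auto
  also have "\<dots> = exp (\<xi> p) * (dy \<xi> p * sin (\<alpha> p) + cos (\<alpha> p) * dy \<alpha> p)"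
    by (rule dy_eqI_real)
      (auto intro!: derivative_eq_intros has_real_derivative_parameters[OF p] simp: algebra_simps)
  finally show ?thesis .
qed

lemma dy_A1: "p \<in> U \<Longrightarrow> dy A1 p = dy h p * sin (\<alpha> p) - (sin (\<alpha> p) - h p * cos (\<alpha> p)) * dy \<alpha> p"
proof -
  assume p: "p \<in> U"
  have "dy A1 p = dy (\<lambda>q. cos (\<alpha> q) + h q * sin (\<alpha> q)) p"
    using A1_rep by (intro dy_cong[OF open_U p]) auto
  also have "\<dots> = dy h p * sin (\<alpha> p) - (sin (\<alpha> p) - h p * cos (\<alpha> p)) * dy \<alpha> p"
    by (rule dy_eqI_real)
      (auto intro!: derivative_eq_intros has_real_derivative_parameters[OF p] simp: algebra_simps)
  finally show ?thesis .
qed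

lemma alpha_x_eq: "p \<in> U \<Longrightarrow> - dx \<alpha> p + dx \<xi> p * cot (\<alpha> p) = - \<sigma> p * (dx A2 p / A1 p)"
proof -
  assume p: "p \<in> U"
  define Q where "Q = dx A2 p / A1 p"
  have "exp (\<xi> p) * (- \<sigma> p * (dx \<xi> p * cos (\<alpha> p) - sin (\<alpha> p) * dx \<alpha> p))
      = exp (\<xi> p) * (Q * sin (\<alpha> p))"
    using codazzi_Kc[OF p] dx_Kc[OF p] Hc_rep[OF p] unfolding Q_def by (simp add: algebra_simps)
  then have "- \<sigma> p * (dx \<xi> p * cos (\<alpha> p) - sin (\<alpha> p) * dx \<alpha> p) = Q * sin (\<alpha> p)"
    by (metis exp_not_eq_zero mult_left_cancel)
  then have "dx \<xi> p * cos (\<alpha> p) - sin (\<alpha> p) * dx \<alpha> p = - \<sigma> p * Q * sin (\<alpha> p)"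
    using sigma_sq[OF p] by algebra
  then show ?thesis
    using sin_alpha_nz[OF p] unfolding Q_def by (simp add: cot_def field_simps)
qed

lemma alpha_y_eq: "p \<in> U \<Longrightarrow> dy \<alpha> p + dy \<xi> p * tan (\<alpha> p) = - \<sigma> p * (dy A1 p / A2 p)"
proof -
  assume p: "p \<in> U"
  define P where "P = dy A1 p / A2 p"
  have "exp (\<xi> p) * (dy \<xi> p * sin (\<alpha> p) + cos (\<alpha> p) * dy \<alpha> p)
      = exp (\<xi> p) * (- \<sigma> p * P * cos (\<alpha> p))"
    using codazzi_Hc[OF p] dy_Hc[OF p] Kc_rep[OF p] unfolding P_def by (simp add: algebra_simps)
  then have "dy \<xi> p * sin (\<alpha> p) + cos (\<alpha> p) * dy \<alpha> p = - \<sigma> p * P * cos (\<alpha> p)"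
    by (metis exp_not_eq_zero mult_left_cancel)
  then show ?thesis
    using cos_alpha_nz[OF p] unfolding P_def by (simp add: tan_def field_simps)
qed

lemma dx_h: "p \<in> U \<Longrightarrow> dx h p = (h p + cot (\<alpha> p)) * dx \<xi> p"
proof -
  assume p: "p \<in> U"
  define Q where "Q = dx A2 p / A1 p"
  have "\<sigma> p * ((cos (\<alpha> p) + h p * sin (\<alpha> p)) * dx \<alpha> p - dx h p * cos (\<alpha> p))
      = Q * (cos (\<alpha> p) + h p * sin (\<alpha> p))"
    using dx_A2[OF p] A1_rep[OF p] A1_nz[OF p] by (simp add: Q_def)
  also have "Q = \<sigma> p * (dx \<alpha> p - dx \<xi> p * cot (\<alpha> p))"
    using alpha_x_eq[OF p] sigma_sq[OF p] unfolding Q_def[symmetric] by algebra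
  finally have "\<sigma> p * (dx h p * cos (\<alpha> p)) = \<sigma> p * (dx \<xi> p * cot (\<alpha> p) * (cos (\<alpha> p) + h p * sin (\<alpha> p)))"
    by (simp add: algebra_simps)
  then have "dx h p * cos (\<alpha> p) = dx \<xi> p * cot (\<alpha> p) * (cos (\<alpha> p) + h p * sin (\<alpha> p))"
    using sigma_nz[OF p] by simp
  also have "\<dots> = (h p + cot (\<alpha> p)) * dx \<xi> p * cos (\<alpha> p)"
    using sin_alpha_nz[OF p] by (simp add: cot_def field_simps)
  finally have "dx h p * cos (\<alpha> p) = (h p + cot (\<alpha> p)) * dx \<xi> p * cos (\<alpha> p)" .
  then show ?thesis
    using cos_alpha_nz[OF p] by simp
qed

lemma dy_h: "p \<in> U \<Longrightarrow> dy h p = (h p - tan (\<alpha> p)) * dy \<xi> p"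
proof -
  assume p: "p \<in> U"
  define P where "P = dy A1 p / A2 p"
  have "dy h p * sin (\<alpha> p) - (sin (\<alpha> p) - h p * cos (\<alpha> p)) * dy \<alpha> p
      = \<sigma> p * P * (sin (\<alpha> p) - h p * cos (\<alpha> p))"
    using dy_A1[OF p] A2_rep[OF p] A2_nz[OF p] by (simp add: P_def)
  also have "\<sigma> p * P = - (dy \<alpha> p + dy \<xi> p * tan (\<alpha> p))"
    using alpha_y_eq[OF p] sigma_sq[OF p] unfolding P_def[symmetric] by algebra
  finally have "dy h p * sin (\<alpha> p) = - dy \<xi> p * tan (\<alpha> p) * (sin (\<alpha> p) - h p * cos (\<alpha> p))"
    by (simp add: algebra_simps)
  also have "\<dots> = (h p - tan (\<alpha> p)) * dy \<xi> p * sin (\<alpha> p)"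
    using cos_alpha_nz[OF p] by (simp add: tan_def field_simps)
  finally show ?thesis
    using sin_alpha_nz[OF p] by simp
qed

lemma dy_dx_xi:
  assumes p: "p \<in> U"
  shows "dy (dx \<xi>) p = dx \<xi> p * dy \<xi> p + (cot (\<alpha> p) * dy \<alpha> p) * dx \<xi> p + (- tan (\<alpha> p) * dx \<alpha> p) * dy \<xi> p"
proof -
  have cot: "((\<lambda>t. cot (\<alpha> (fst p, t))) has_real_derivative - dy \<alpha> p / (sin (\<alpha> p))\<^sup>2) (at (snd p))"
  proof -
    have "(cot has_real_derivative - inverse ((sin (\<alpha> p))\<^sup>2)) (at (\<alpha> (fst p, snd p)))"
      using sin_alpha_nz[OF p] by simp
    from DERIV_chain2[OF this has_real_derivative_dy[OF open_U p differentiable_parameters(3)]] show ?thesis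
      by (simp add: divide_inverse mult.commute)
  qed
  have "dy (dx h) p = dy (\<lambda>q. (h q + cot (\<alpha> q)) * dx \<xi> q) p"
    using dx_h by (intro dy_cong[OF open_U p]) auto
  also have "\<dots> = (dy h p - dy \<alpha> p / (sin (\<alpha> p))\<^sup>2) * dx \<xi> p + (h p + cot (\<alpha> p)) * dy (dx \<xi>) p"
    by (rule dy_eqI_real) (auto intro!: derivative_eq_intros cot has_real_derivative_parameters[OF p]
        has_real_derivative_dy[OF open_U p differentiable_parameters(5)])
  finally have h_xy: "dy (dx h) p = \<dots>" .
  have "dx (dy h) p = dx (\<lambda>q. (h q - tan (\<alpha> q)) * dy \<xi> q) p"
    using dy_h by (intro dx_cong[OF open_U p]) auto
  also have "\<dots> = (dx h p - dx \<alpha> p / (cos (\<alpha> p))\<^sup>2) * dy \<xi> p + (h p - tan (\<alpha> p)) * dx (dy \<xi>) p"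
    by (rule dx_eqI_real) (auto intro!: derivative_eq_intros has_real_derivative_parameters[OF p]
        has_real_derivative_dx[OF open_U p differentiable_parameters(6)]
        simp: cos_alpha_nz[OF p] divide_inverse ac_simps)
  finally have h_yx: "dx (dy h) p = \<dots>" .
  have "((h p - sin (\<alpha> p) / cos (\<alpha> p)) * dy \<xi> p - dy \<alpha> p / (sin (\<alpha> p))\<^sup>2) * dx \<xi> p
      + (h p + cos (\<alpha> p) / sin (\<alpha> p)) * dy (dx \<xi>) p
      = ((h p + cos (\<alpha> p) / sin (\<alpha> p)) * dx \<xi> p - dx \<alpha> p / (cos (\<alpha> p))\<^sup>2) * dy \<xi> p
      + (h p - sin (\<alpha> p) / cos (\<alpha> p)) * dy (dx \<xi>) p"
    using h_xy h_yx dx_h[OF p] dy_h[OF p] smooth_on_dy_dx_eq_dx_dy[OF open_U p smooth_h]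
      smooth_on_dy_dx_eq_dx_dy[OF open_U p smooth_xi]
    by (simp add: cot_def tan_def)
  then show ?thesis
    using xi_compatibility_algebra[OF sin_alpha_nz[OF p] cos_alpha_nz[OF p] sin_cos_squared_add]
    by (simp add: cot_def tan_def)
qed

lemma gauss_alpha_xi:
  assumes p: "p \<in> U"
  shows "dx (\<lambda>q. - dx \<alpha> q + dx \<xi> q * cot (\<alpha> q)) p + dy (\<lambda>q. dy \<alpha> q + dy \<xi> q * tan (\<alpha> q)) p
    + exp (2 * \<xi> p) * sin (\<alpha> p) * cos (\<alpha> p) = 0"
proof -
  define Q P where "Q = (\<lambda>q. dx A2 q / A1 q)" and "P = (\<lambda>q. dy A1 q / A2 q)"
  have QP: "Q differentiable_on U" "P differentiable_on U"
    unfolding Q_def P_def using A1_nz A2_nz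
    by (intro smooth_on_imp_differentiable_on smooth_on_divide open_U smooth_on_dx smooth_on_dy
        smooth_A1 smooth_A2; blast)+
  have "dx (\<lambda>q. - dx \<alpha> q + dx \<xi> q * cot (\<alpha> q)) p = dx (\<lambda>q. - \<sigma> q * Q q) p"
    using alpha_x_eq by (intro dx_cong[OF open_U p]) (simp add: Q_def)
  also have "\<dots> = - \<sigma> p * dx Q p"
    by (rule dx_eqI_real) (auto intro!: derivative_eq_intros has_real_derivative_parameters[OF p]
        has_real_derivative_dx[OF open_U p QP(1)] simp: dx_sigma[OF p])
  finally have "dx (\<lambda>q. - dx \<alpha> q + dx \<xi> q * cot (\<alpha> q)) p = - \<sigma> p * dx Q p" .
  moreover have "dy (\<lambda>q. dy \<alpha> q + dy \<xi> q * tan (\<alpha> q)) p = dy (\<lambda>q. - \<sigma> q * P q) p"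
    using alpha_y_eq by (intro dy_cong[OF open_U p]) (simp add: P_def)
  moreover have "\<dots> = - \<sigma> p * dy P p"
    by (rule dy_eqI_real) (auto intro!: derivative_eq_intros has_real_derivative_parameters[OF p]
        has_real_derivative_dy[OF open_U p QP(2)] simp: dy_sigma[OF p])
  moreover have "dy P p + dx Q p + Hc p * Kc p = 0"
    using gauss[OF p] unfolding P_def Q_def .
  moreover have "exp (2 * \<xi> p) = exp (\<xi> p) * exp (\<xi> p)"
    by (simp add: exp_add[symmetric])
  ultimately show ?thesis
    using Hc_rep[OF p] Kc_rep[OF p] sigma_sq[OF p] by algebra
qed

lemma fundamental_forms:
  assumes p: "p \<in> U"
  shows "dx r p \<bullet> dx r p = (cos (\<alpha> p) + h p * sin (\<alpha> p))\<^sup>2"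
    "dx r p \<bullet> dy r p = 0"
    "dy r p \<bullet> dy r p = (sin (\<alpha> p) - h p * cos (\<alpha> p))\<^sup>2"
    "dx N p \<bullet> dx N p = exp (2 * \<xi> p) * (sin (\<alpha> p))\<^sup>2"
    "dx N p \<bullet> dy N p = 0"
    "dy N p \<bullet> dy N p = exp (2 * \<xi> p) * (cos (\<alpha> p))\<^sup>2"
proof -
  have "dx r p \<bullet> dx r p = (A1 p)\<^sup>2" "dx r p \<bullet> dy r p = 0" "dy r p \<bullet> dy r p = (A2 p)\<^sup>2"
    "dx N p \<bullet> dx N p = (Hc p)\<^sup>2" "dx N p \<bullet> dy N p = 0" "dy N p \<bullet> dy N p = (Kc p)\<^sup>2"
    using r_x r_y N_x N_y p frame_inner[OF p] by (simp_all add: power2_eq_square)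
  moreover have "exp (2 * \<xi> p) = (exp (\<xi> p))\<^sup>2"
    by (simp add: power2_eq_square exp_add[symmetric])
  then have "(A2 p)\<^sup>2 = (sin (\<alpha> p) - h p * cos (\<alpha> p))\<^sup>2"
    "(Hc p)\<^sup>2 = exp (2 * \<xi> p) * (sin (\<alpha> p))\<^sup>2" "(Kc p)\<^sup>2 = exp (2 * \<xi> p) * (cos (\<alpha> p))\<^sup>2"
    using A2_rep[OF p] Hc_rep[OF p] Kc_rep[OF p] sigma_sq[OF p] by algebra+
  ultimately show "dx r p \<bullet> dx r p = (cos (\<alpha> p) + h p * sin (\<alpha> p))\<^sup>2"
    "dx r p \<bullet> dy r p = 0"
    "dy r p \<bullet> dy r p = (sin (\<alpha> p) - h p * cos (\<alpha> p))\<^sup>2"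
    "dx N p \<bullet> dx N p = exp (2 * \<xi> p) * (sin (\<alpha> p))\<^sup>2"
    "dx N p \<bullet> dy N p = 0"
    "dy N p \<bullet> dy N p = exp (2 * \<xi> p) * (cos (\<alpha> p))\<^sup>2"
    using A1_rep[OF p] by simp_all
qed

lemma stress_resultants:
  assumes p: "p \<in> U"
  shows "T1 p = qn * exp (- \<xi> p) / 2
      * ((2 * h p * sin (\<alpha> p) + (1 - (h p)\<^sup>2) * cos (\<alpha> p)) / (sin (\<alpha> p) - h p * cos (\<alpha> p)))"
    "T2 p = qn * exp (- \<xi> p) / 2
      * ((2 * h p * cos (\<alpha> p) - (1 - (h p)\<^sup>2) * sin (\<alpha> p)) / (cos (\<alpha> p) + h p * sin (\<alpha> p)))"
proof -
  define den1 num1 den2 num2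
    where "den1 = sin (\<alpha> p) - h p * cos (\<alpha> p)" and "num1 = 2 * h p * sin (\<alpha> p) + (1 - (h p)\<^sup>2) * cos (\<alpha> p)"
      and "den2 = cos (\<alpha> p) + h p * sin (\<alpha> p)" and "num2 = 2 * h p * cos (\<alpha> p) - (1 - (h p)\<^sup>2) * sin (\<alpha> p)"
  have "T1 p * (2 * A2 p * Kc p) = qn * ((A2 p)\<^sup>2 - 1)" "T2 p * (2 * A1 p * Hc p) = qn * ((A1 p)\<^sup>2 - 1)"
    using kind2_x kind2_y p by (simp_all add: algebra_simps)
  moreover have "2 * A2 p * Kc p = - 2 * exp (\<xi> p) * cos (\<alpha> p) * den1" "(A2 p)\<^sup>2 - 1 = - cos (\<alpha> p) * num1"
    "2 * A1 p * Hc p = 2 * exp (\<xi> p) * sin (\<alpha> p) * den2" "(A1 p)\<^sup>2 - 1 = sin (\<alpha> p) * num2"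
    unfolding den1_def num1_def den2_def num2_def
    using A1_rep[OF p] A2_rep[OF p] Hc_rep[OF p] Kc_rep[OF p] sigma_sq[OF p] sin_cos_squared_add[of "\<alpha> p"]
    by algebra+
  ultimately have "T1 p * (- 2 * exp (\<xi> p) * cos (\<alpha> p) * den1) = qn * (- cos (\<alpha> p) * num1)"
    "T2 p * (2 * exp (\<xi> p) * sin (\<alpha> p) * den2) = qn * (sin (\<alpha> p) * num2)"
    by simp_all
  moreover have "den1 \<noteq> 0" "den2 \<noteq> 0"
    using A1_nz[OF p] A2_nz[OF p] A1_rep[OF p] A2_rep[OF p] unfolding den1_def den2_def by auto
  ultimately show "T1 p = qn * exp (- \<xi> p) / 2 * (num1 / den1)" "T2 p = qn * exp (- \<xi> p) / 2 * (num2 / den2)"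
    using sin_alpha_nz[OF p] cos_alpha_nz[OF p] by (simp_all add: exp_minus field_simps)
qed

end

theorem mainTheorem2:
  fixes U :: "(real \<times> real) set"
    and r X Y :: "real \<times> real \<Rightarrow> real^3"
    and A1 A2 Hc Kc T1 T2 :: "real \<times> real \<Rightarrow> real"
    and qn :: real
  assumes U_open: "open U"
    and smooth: "smooth_on U r" "smooth_on U X" "smooth_on U Y" "smooth_on U A1" "smooth_on U A2"
    and T_diff: "T1 differentiable_on U" "T2 differentiable_on U"
    and A_nz: "\<forall>p\<in>U. A1 p \<noteq> 0 \<and> A2 p \<noteq> 0"
    and frame: "\<forall>p\<in>U. norm (X p) = 1 \<and> norm (Y p) = 1 \<and> X p \<bullet> Y p = 0"
    and r_x: "\<forall>p\<in>U. dx r p = A1 p *\<^sub>R X p"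
    and r_y: "\<forall>p\<in>U. dy r p = A2 p *\<^sub>R Y p"
    and N_x: "\<forall>p\<in>U. dx (\<lambda>q. cross3 (X q) (Y q)) p = Hc p *\<^sub>R X p"
    and N_y: "\<forall>p\<in>U. dy (\<lambda>q. cross3 (X q) (Y q)) p = Kc p *\<^sub>R Y p"
    and curv_nz: "\<forall>p\<in>U. Hc p \<noteq> 0 \<and> Kc p \<noteq> 0"
    and qn_nz: "qn \<noteq> 0"
    and eq1: "\<forall>p\<in>U. dx T1 p + (dx A1 p / A1 p) * (T1 p - T2 p) = 0"
    and eq2: "\<forall>p\<in>U. dy T2 p + (dy A2 p / A2 p) * (T2 p - T1 p) = 0"
    and eq3: "\<forall>p\<in>U. (- Hc p / A1 p) * T1 p + (- Kc p / A2 p) * T2 p + qn = 0"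
    and kind2_x: "\<forall>p\<in>U. 2 * (T2 p * A1 p) * Hc p - qn * (A1 p)\<^sup>2 = - qn"
    and kind2_y: "\<forall>p\<in>U. 2 * (T1 p * A2 p) * Kc p - qn * (A2 p)\<^sup>2 = - qn"
  shows "\<exists>h \<alpha> \<xi> :: real \<times> real \<Rightarrow> real.
           smooth_on U h \<and> smooth_on U \<alpha> \<and> smooth_on U \<xi> \<and>
           (\<forall>p\<in>U.
              \<comment> \<open>first fundamental form\<close>
              dx r p \<bullet> dx r p = (cos (\<alpha> p) + h p * sin (\<alpha> p))\<^sup>2 \<and>
              dx r p \<bullet> dy r p = 0 \<and>
              dy r p \<bullet> dy r p = (sin (\<alpha> p) - h p * cos (\<alpha> p))\<^sup>2 \<and>
              \<comment> \<open>third fundamental form\<close>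
              dx (\<lambda>q. cross3 (X q) (Y q)) p \<bullet> dx (\<lambda>q. cross3 (X q) (Y q)) p
                = exp (2 * \<xi> p) * (sin (\<alpha> p))\<^sup>2 \<and>
              dx (\<lambda>q. cross3 (X q) (Y q)) p \<bullet> dy (\<lambda>q. cross3 (X q) (Y q)) p = 0 \<and>
              dy (\<lambda>q. cross3 (X q) (Y q)) p \<bullet> dy (\<lambda>q. cross3 (X q) (Y q)) p
                = exp (2 * \<xi> p) * (cos (\<alpha> p))\<^sup>2 \<and>
              \<comment> \<open>the system for h, alpha, xi\<close>
              dx h p = (h p + cot (\<alpha> p)) * dx \<xi> p \<and>
              dy h p = (h p - tan (\<alpha> p)) * dy \<xi> p \<and>
              dy (dx \<xi>) p = dx \<xi> p * dy \<xi> p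
                 + (cot (\<alpha> p) * dy \<alpha> p) * dx \<xi> p
                 + (- tan (\<alpha> p) * dx \<alpha> p) * dy \<xi> p \<and>
              dx (\<lambda>q. - dx \<alpha> q + dx \<xi> q * cot (\<alpha> q)) p
                + dy (\<lambda>q. dy \<alpha> q + dy \<xi> q * tan (\<alpha> q)) p
                + exp (2 * \<xi> p) * sin (\<alpha> p) * cos (\<alpha> p) = 0 \<and>
              \<comment> \<open>stress resultants\<close>
              T1 p = qn * exp (- \<xi> p) / 2
                     * ((2 * h p * sin (\<alpha> p) + (1 - (h p)\<^sup>2) * cos (\<alpha> p))
                        / (sin (\<alpha> p) - h p * cos (\<alpha> p))) \<and>
              T2 p = qn * exp (- \<xi> p) / 2
                     * ((2 * h p * cos (\<alpha> p) - (1 - (h p)\<^sup>2) * sin (\<alpha> p))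
                        / (cos (\<alpha> p) + h p * sin (\<alpha> p))))"
proof -
  interpret membrane_O_surface_2nd_kind U r X Y A1 A2 Hc Kc T1 T2 qn
    by unfold_locales (rule assms)+
  show ?thesis
    by (rule exI[of _ h], rule exI[of _ \<alpha>], rule exI[of _ \<xi>])
      (use gauss_alpha_xi in \<open>simp add: smooth_h smooth_alpha smooth_xi fundamental_forms dx_h dy_h dy_dx_xi
        stress_resultants\<close>)
qed

end
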